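(* Let $L$ be a positive integer and $U>0$ with $L>\frac{8}{U}$, and let $N=2$. Consider the Lieb-Wu equations with one down spin in the unknowns $k_1,k_2$ and real $\Lambda$: $$e^{i k_j L} = \frac{\Lambda - \sin k_j - iU/4}{\Lambda - \sin k_j + iU/4},\quad j=1,2,\qquad \prod_{j=1}^2 \frac{\Lambda - \sin k_j - iU/4}{\Lambda - \sin k_j + iU/4} = 1.$$ Call a solution a $k$-$\Lambda$ two-string if $k_1 = q - i\xi$, $k_2 = q+i\xi$ with $q$ real (taken modulo $2\pi$, i.e. $q\in[0,2\pi)$) and $\xi>0$. Then such $k$-$\Lambda$ two-string solutions exist only if $\frac{\pi}{2} < q < \frac{3\pi}{2}$. The allowed values of $q$ in that range are quantized as $q = m\frac{\pi}{L}$ with $m$ an integer. For every $q = m\frac{\pi}{L}$ with $\frac{\pi}{2}<q<\frac{3\pi}{2}$ there is one and only one $k$-$\Lambda$ two-string. The total number of $k$-$\Lambda$ two-strings is $L$ if $L$ is odd and $L-1$ if $L$ is even.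
   Context: Here $k_1,k_2$ are complex numbers determined modulo $2\pi$; solutions are counted modulo permutation of $k_1,k_2$. *)

theory Defs
  imports Complex_Main
begin

definition LW_factor :: "real \<Rightarrow> real \<Rightarrow> complex \<Rightarrow> complex" where
  "LW_factor U Lam k =
     (complex_of_real Lam - sin k - \<i> * complex_of_real U / 4) /
     (complex_of_real Lam - sin k + \<i> * complex_of_real U / 4)"

definition lieb_wu2 :: "nat \<Rightarrow> real \<Rightarrow> complex \<Rightarrow> complex \<Rightarrow> real \<Rightarrow> bool" where
  "lieb_wu2 L U k1 k2 Lam \<longleftrightarrow>
     exp (\<i> * k1 * of_nat L) = LW_factor U Lam k1 \<and>
     exp (\<i> * k2 * of_nat L) = LW_factor U Lam k2 \<and>
     LW_factor U Lam k1 * LW_factor U Lam k2 = 1"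

text \<open>k-Lambda two-strings: k1 = q - i xi, k2 = q + i xi, q in [0, 2 pi), xi > 0, Lambda real.
  Such a solution is recorded by the triple (q, xi, Lambda); this fixes the order of k1, k2,
  so solutions are counted modulo permutation.\<close>
definition two_strings :: "nat \<Rightarrow> real \<Rightarrow> (real \<times> real \<times> real) set" where
  "two_strings L U = {(q, xi, Lam). 0 \<le> q \<and> q < 2 * pi \<and> xi > 0 \<and>
      lieb_wu2 L U (complex_of_real q - \<i> * complex_of_real xi)
                   (complex_of_real q + \<i> * complex_of_real xi) Lam}"

end

theory Submission
  imports Defs "HOL-Analysis.Complex_Transcendental" "HOL-Real_Asymp.Real_Asymp"
begin

(* For k1 = q - i xi and k2 = cnj k1 the second Lieb-Wu equation is the complex conjugate of the
   inverse of the first, and then the product equation says that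
   exp (i k1 L) = exp (xi L) exp (i q L) is real, i.e. sin (q L) = 0. The scattering factor takes the real value P = cos (q L) exp (xi L),
   with |P| > 1, iff Lambda - sin k1 = i U/4 (1 + P) / (1 - P). Comparing real and imaginary parts
   gives Lambda = sin q cosh xi and cos q sinh xi = U/4 (1 + P) / (1 - P) < 0, so cos q < 0.
   For cos (q L) = 1 resp. -1 the last equation reads sinh xi tanh (L xi / 2) = U / (-4 cos q)
   resp. sinh xi / tanh (L xi / 2) = U / (-4 cos q). Both left-hand sides increase strictly from
   0 resp. 2 / L to infinity, and L U > 8 puts the right-hand side above 2 / L, so xi is unique.
   The two-strings are therefore in bijection with the integers m with L < 2 m < 3 L. *)

lemma sin_of_real_minus_ii_times:
  "sin (of_real q - \<i> * of_real x) = Complex (sin q * cosh x) (- (cos q * sinh x))"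
  by (simp add: complex_eq_iff Re_sin Im_sin sinh_field_def cosh_field_def field_simps)

lemma exp_ii_times_of_real_minus_ii_times:
  "exp (\<i> * (of_real q - \<i> * of_real x) * of_nat n) =
     Complex (exp (x * n) * cos (q * n)) (exp (x * n) * sin (q * n))"
proof -
  have "\<i> * (of_real q - \<i> * of_real x) * of_nat n = Complex (x * n) (q * n)"
    by (simp add: complex_eq_iff)
  then show ?thesis
    by (simp add: complex_eq_iff Re_exp Im_exp)
qed

lemma exp_ii_times_cnj:
  "exp (\<i> * cnj z * of_nat n) = cnj (inverse (exp (\<i> * z * of_nat n)))"
  by (simp add: exp_cnj exp_minus[symmetric])

lemma LW_factor_cnj: "LW_factor U Lam (cnj z) = cnj (inverse (LW_factor U Lam z))"
  by (simp add: LW_factor_def cnj_sin[symmetric])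

lemma mult_cnj_inverse_eq_1_iff:
  fixes z :: complex
  assumes "z \<noteq> 0"
  shows "z * cnj (inverse z) = 1 \<longleftrightarrow> Im z = 0"
proof -
  have "z * cnj (inverse z) = 1 \<longleftrightarrow> z = cnj z"
    using assms by (simp add: complex_cnj_inverse field_simps)
  also have "\<dots> \<longleftrightarrow> Im z = 0"
    by (simp add: complex_eq_iff)
  finally show ?thesis .
qed

lemma lieb_wu2_cnj_iff:
  "lieb_wu2 L U z (cnj z) Lam \<longleftrightarrow>
     exp (\<i> * z * of_nat L) = LW_factor U Lam z \<and> Im (exp (\<i> * z * of_nat L)) = 0"
  using mult_cnj_inverse_eq_1_iff[of "exp (\<i> * z * of_nat L)"]
  by (auto simp: lieb_wu2_def exp_ii_times_cnj LW_factor_cnj)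

lemma LW_factor_eq_of_real_iff:
  fixes P :: real
  assumes "P \<noteq> 0" "P \<noteq> 1" "U \<noteq> 0"
  shows "LW_factor U Lam z = of_real P \<longleftrightarrow>
           of_real Lam - sin z = \<i> * of_real (U / 4 * (1 + P) / (1 - P))"
proof -
  define w where "w = of_real Lam - sin z"
  define u where "u = \<i> * of_real U / 4"
  have u: "u \<noteq> 0"
    using assms(3) by (simp add: u_def)
  have "LW_factor U Lam z = of_real P \<longleftrightarrow> (w - u) / (w + u) = of_real P"
    by (simp add: LW_factor_def w_def u_def)
  also have "\<dots> \<longleftrightarrow> w * (1 - of_real P) = u * (1 + of_real P)"
  proof
    assume eq: "(w - u) / (w + u) = of_real P"
    then have "w + u \<noteq> 0"
      using assms(1) by auto
    with eq show "w * (1 - of_real P) = u * (1 + of_real P)"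
      by (simp add: field_simps)
  next
    assume eq: "w * (1 - of_real P) = u * (1 + of_real P)"
    have "w + u \<noteq> 0"
    proof
      assume "w + u = 0"
      then have "w = - u"
        by (simp add: eq_neg_iff_add_eq_0)
      with eq have "u * 2 = 0"
        by (simp add: algebra_simps)
      with u show False
        by simp
    qed
    with eq show "(w - u) / (w + u) = of_real P"
      by (simp add: field_simps)
  qed
  also have "\<dots> \<longleftrightarrow> w = u * (1 + of_real P) / (1 - of_real P)"
    using assms(2) by (auto simp: field_simps)
  finally show ?thesis
    by (simp add: w_def u_def mult.assoc)
qed

lemma abs_cos_eq_1_if_sin_eq_0: "sin (y::real) = 0 \<Longrightarrow> \<bar>cos y\<bar> = 1"
  using sin_cos_squared_add[of y] by (simp add: abs_square_eq_1)

lemma lieb_wu2_two_string_iff: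
  assumes x: "x > 0" and L: "L > 0" and U: "U \<noteq> 0"
  shows "lieb_wu2 L U (of_real q - \<i> * of_real x) (of_real q + \<i> * of_real x) Lam \<longleftrightarrow>
    sin (q * L) = 0 \<and> Lam = sin q * cosh x \<and>
    cos q * sinh x = U / 4 * (1 + cos (q * L) * exp (x * L)) / (1 - cos (q * L) * exp (x * L))"
proof -
  define z where "z = of_real q - \<i> * of_real x"
  define P where "P = exp (x * L) * cos (q * L)"
  have exp_z:
    "exp (\<i> * z * of_nat L) = Complex (exp (x * L) * cos (q * L)) (exp (x * L) * sin (q * L))"
    by (simp add: z_def exp_ii_times_of_real_minus_ii_times)
  have P: "P \<noteq> 0 \<and> P \<noteq> 1" if "sin (q * L) = 0"
  proof -
    have "\<bar>P\<bar> = exp (x * L)"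
      using abs_cos_eq_1_if_sin_eq_0[OF that] by (simp add: P_def abs_mult)
    moreover have "exp (x * L) > 1"
      using x L by simp
    ultimately show ?thesis
      by auto
  qed
  have "lieb_wu2 L U z (cnj z) Lam \<longleftrightarrow> sin (q * L) = 0 \<and> LW_factor U Lam z = of_real P"
    by (auto simp: lieb_wu2_cnj_iff exp_z P_def complex_eq_iff)
  also have "\<dots> \<longleftrightarrow>
      sin (q * L) = 0 \<and> of_real Lam - sin z = \<i> * of_real (U / 4 * (1 + P) / (1 - P))"
    using P LW_factor_eq_of_real_iff U by blast
  also have "\<dots> \<longleftrightarrow>
      sin (q * L) = 0 \<and> Lam = sin q * cosh x \<and> cos q * sinh x = U / 4 * (1 + P) / (1 - P)"
    by (auto simp: z_def sin_of_real_minus_ii_times complex_eq_iff)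
  finally show ?thesis
    by (simp add: z_def P_def mult.commute)
qed

lemma strict_mono_on_ex1_eq:
  fixes f :: "real \<Rightarrow> real"
  assumes cont: "continuous_on {0<..} f" and mono: "strict_mono_on {0<..} f"
    and lim0: "(f \<longlongrightarrow> l) (at_right 0)" and lim_top: "filterlim f at_top at_top"
    and "l < y"
  shows "\<exists>!t. t > 0 \<and> f t = y"
proof (rule ex_ex1I)
  have "eventually (\<lambda>t. f t < y) (at_right 0)"
    using order_tendstoD(2)[OF lim0 \<open>l < y\<close>] .
  then obtain b where "b > 0" and below: "\<And>t. 0 < t \<Longrightarrow> t < b \<Longrightarrow> f t < y"
    by (auto simp: eventually_at_right_field)
  define a where "a = b / 2"
  have a: "a > 0" "f a < y"
    using \<open>b > 0\<close> below by (auto simp: a_def)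
  have "eventually (\<lambda>t. f t > y) at_top"
    using lim_top by (simp add: filterlim_at_top_dense)
  then obtain N where above: "\<And>t. t \<ge> N \<Longrightarrow> f t > y"
    by (auto simp: eventually_at_top_linorder)
  define c where "c = max a N"
  have "a \<le> c" "f c > y"
    using above by (auto simp: c_def)
  moreover have "continuous_on {a..c} f"
    using cont by (rule continuous_on_subset) (use a in auto)
  ultimately obtain t where "a \<le> t" "f t = y"
    using IVT'[of f a y c] a by force
  with a show "\<exists>t. t > 0 \<and> f t = y"
    by (intro exI[of _ t]) auto
next
  show "s = t" if "s > 0 \<and> f s = y" "t > 0 \<and> f t = y" for s t
    using strict_mono_on_imp_inj_on[OF mono] that by (auto dest: inj_onD)
qed

lemma tanh_half_real: "tanh (x / 2) = (exp x - 1) / (exp x + 1 :: real)"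
proof -
  have "tanh (x / 2) = (1 - exp (- x)) / (1 + exp (- x))"
    by (simp add: tanh_real_altdef)
  also have "\<dots> = (exp x - 1) / (exp x + 1)"
    by (simp add: exp_minus divide_simps add_pos_pos)
  finally show ?thesis .
qed

lemma sinh_real_mult_nat_ge: "(x::real) \<ge> 0 \<Longrightarrow> real n * sinh x \<le> sinh (real n * x)"
proof (induction n)
  case 0
  then show ?case by simp
next
  case (Suc n)
  have "real (Suc n) * sinh x = real n * sinh x + sinh x"
    by (simp add: algebra_simps)
  also have "\<dots> \<le> sinh (real n * x) * cosh x + cosh (real n * x) * sinh x"
  proof (rule add_mono)
    have "real n * sinh x \<le> sinh (real n * x)"
      using Suc by simp
    also have "\<dots> \<le> sinh (real n * x) * cosh x"
      using mult_left_mono[OF cosh_real_ge_1[of x], of "sinh (real n * x)"] Suc.prems by simp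
    finally show "real n * sinh x \<le> sinh (real n * x) * cosh x" .
    show "sinh x \<le> cosh (real n * x) * sinh x"
      using Suc.prems cosh_real_ge_1[of "real n * x"] by (simp add: mult_le_cancel_right1)
  qed
  also have "\<dots> = sinh (real (Suc n) * x)"
    by (simp add: distrib_right sinh_add)
  finally show ?case .
qed

lemma ex1_sinh_mult_tanh_eq:
  fixes a y :: real
  assumes "a > 0" "y > 0"
  shows "\<exists>!t. t > 0 \<and> sinh t * tanh (a * t) = y"
proof (rule strict_mono_on_ex1_eq)
  show "continuous_on {0<..} (\<lambda>t. sinh t * tanh (a * t))"
    by (intro continuous_intros) auto
  show "strict_mono_on {0<..} (\<lambda>t. sinh t * tanh (a * t))"
    using assms(1) by (intro strict_mono_onI mult_strict_mono) auto
  show "((\<lambda>t. sinh t * tanh (a * t)) \<longlongrightarrow> 0) (at_right 0)"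
    using assms(1) by real_asymp
  show "filterlim (\<lambda>t. sinh t * tanh (a * t)) at_top at_top"
    using assms(1) by real_asymp
qed (use assms in auto)

lemma has_real_derivative_sinh_div_tanh:
  fixes x :: real
  assumes "x > 0" "L > 0"
  shows "((\<lambda>t. sinh t / tanh (L * t / 2)) has_real_derivative
           (cosh x * sinh (L * x) - L * sinh x) / (2 * sinh (L * x / 2) ^ 2)) (at x)"
proof -
  define y where "y = L * x / 2"
  have "y > 0"
    using assms by (simp add: y_def)
  then have nz: "sinh y \<noteq> 0" "cosh y \<noteq> 0" "tanh y \<noteq> 0"
    by auto
  have "((\<lambda>t. sinh t / tanh (L * t / 2)) has_real_derivative
          (cosh x * tanh y - sinh x * ((1 - tanh y ^ 2) * (L / 2))) / tanh y ^ 2) (at x)"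
    using nz by (auto intro!: derivative_eq_intros simp: y_def power2_eq_square)
  moreover have "1 - tanh y ^ 2 = 1 / cosh y ^ 2"
    using nz by (simp add: tanh_def field_simps sinh_square_eq)
  moreover have "sinh (L * x) = 2 * sinh y * cosh y"
    using sinh_double[of y] by (simp add: y_def)
  moreover have "(cosh x * tanh y - sinh x * (1 / cosh y ^ 2 * (L / 2))) / tanh y ^ 2 =
      (cosh x * (2 * sinh y * cosh y) - L * sinh x) / (2 * sinh y ^ 2)"
    using nz by (simp add: tanh_def field_simps power2_eq_square)
  ultimately show ?thesis
    by (simp add: y_def)
qed

lemma strict_mono_on_sinh_div_tanh:
  assumes "L > 0"
  shows "strict_mono_on {0<..} (\<lambda>t. sinh t / tanh (real L * t / 2))"
proof (rule strict_mono_onI)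
  fix s t :: real
  assume "s \<in> {0<..}" "s < t"
  show "sinh s / tanh (real L * s / 2) < sinh t / tanh (real L * t / 2)"
  proof (rule DERIV_pos_imp_increasing[OF \<open>s < t\<close>], intro exI conjI)
    fix x
    assume "s \<le> x"
    with \<open>s \<in> {0<..}\<close> have "x > 0"
      by simp
    with assms show "((\<lambda>t. sinh t / tanh (real L * t / 2)) has_real_derivative
           (cosh x * sinh (L * x) - L * sinh x) / (2 * sinh (L * x / 2) ^ 2)) (at x)"
      by (intro has_real_derivative_sinh_div_tanh) auto
    have "L * sinh x \<le> sinh (L * x)"
      using \<open>x > 0\<close> by (intro sinh_real_mult_nat_ge) simp
    also have "\<dots> < cosh x * sinh (L * x)"
      using \<open>x > 0\<close> assms cosh_real_nonneg_less_iff[of 0 x] by simp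
    finally show "(cosh x * sinh (L * x) - L * sinh x) / (2 * sinh (L * x / 2) ^ 2) > 0"
      using \<open>x > 0\<close> assms by simp
  qed
qed

lemma ex1_sinh_div_tanh_eq:
  fixes y :: real
  assumes "L > 0" "2 / L < y"
  shows "\<exists>!t. t > 0 \<and> sinh t / tanh (real L * t / 2) = y"
proof (rule strict_mono_on_ex1_eq)
  show "continuous_on {0<..} (\<lambda>t. sinh t / tanh (real L * t / 2))"
    using assms(1) by (intro continuous_intros) auto
  show "((\<lambda>t. sinh t / tanh (real L * t / 2)) \<longlongrightarrow> 2 / L) (at_right 0)"
    using assms(1) by real_asymp
  show "filterlim (\<lambda>t. sinh t / tanh (real L * t / 2)) at_top at_top"
    using assms(1) by real_asymp
qed (use assms strict_mono_on_sinh_div_tanh in auto)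

lemma ex1_two_string_xi:
  fixes c u C :: real and L :: nat
  assumes C: "C = 1 \<or> C = -1" and c: "-1 \<le> c" "c < 0" and u: "u > 0" "2 < u * L"
  shows "\<exists>!x. x > 0 \<and> c * sinh x = u * (1 + C * exp (x * L)) / (1 - C * exp (x * L))"
proof -
  have L: "L > 0"
    using u by (cases L) auto
  have "2 / real L < u"
    using u L by (simp add: field_simps)
  also have "u \<le> u / - c"
    using c u mult_right_mono[of "-1" c u] by (simp add: field_simps)
  finally have y: "2 / real L < u / - c" .
  have tanh: "tanh (x * real L / 2) = (exp (x * L) - 1) / (exp (x * L) + 1)" for x :: real
    using tanh_half_real[of "x * L"] by simp
  have E: "1 - exp (x * L) \<noteq> 0" "1 + exp (x * L) \<noteq> 0" if "x > 0" for x :: real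
  proof -
    have "exp (x * L) > 1"
      using that L by simp
    then show "1 - exp (x * L) \<noteq> 0" "1 + exp (x * L) \<noteq> 0"
      by linarith+
  qed
  from C show ?thesis
  proof
    assume "C = 1"
    have "x > 0 \<and> c * sinh x = u * (1 + C * exp (x * L)) / (1 - C * exp (x * L)) \<longleftrightarrow>
          x > 0 \<and> sinh x * tanh (real L / 2 * x) = u / - c" for x
      using E[of x] c \<open>C = 1\<close> by (cases "x > 0") (auto simp: tanh field_simps)
    then show ?thesis
      using ex1_sinh_mult_tanh_eq[of "real L / 2" "u / - c"] L u c divide_pos_neg[of u c] by simp
  next
    assume "C = -1"
    have "x > 0 \<and> c * sinh x = u * (1 + C * exp (x * L)) / (1 - C * exp (x * L)) \<longleftrightarrow>
          x > 0 \<and> sinh x / tanh (real L * x / 2) = u / - c" for x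
      using E[of x] c \<open>C = -1\<close> by (cases "x > 0") (auto simp: tanh field_simps)
    then show ?thesis
      using ex1_sinh_div_tanh_eq[OF L y] by simp
  qed
qed
lemma mem_two_strings_iff:
  assumes "L > 0" "U \<noteq> 0"
  shows "(q, x, Lam) \<in> two_strings L U \<longleftrightarrow>
    0 \<le> q \<and> q < 2 * pi \<and> x > 0 \<and> sin (q * L) = 0 \<and> Lam = sin q * cosh x \<and>
    cos q * sinh x = U / 4 * (1 + cos (q * L) * exp (x * L)) / (1 - cos (q * L) * exp (x * L))"
  using lieb_wu2_two_string_iff[OF _ assms] by (auto simp: two_strings_def)

lemma one_plus_div_one_minus_neg: "1 < \<bar>P\<bar> \<Longrightarrow> (1 + P) / (1 - P) < (0::real)"
  by (cases "P < 0") (simp_all add: divide_less_0_iff)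

lemma cos_lt_zero_imp_bounds:
  assumes "0 \<le> q" "q < 2 * pi" "cos q < 0"
  shows "pi / 2 < q \<and> q < 3 * pi / 2"
proof (rule ccontr)
  assume "\<not> (pi / 2 < q \<and> q < 3 * pi / 2)"
  then consider "q \<le> pi / 2" | "3 * pi / 2 \<le> q"
    by linarith
  then show False
  proof cases
    case 1
    then show False
      using assms cos_ge_zero[of q] by simp
  next
    case 2
    then show False
      using assms cos_ge_zero[of "q - 2 * pi"] by (simp add: cos_diff)
  qed
qed

lemma two_string_quantized:
  assumes "(q, x, Lam) \<in> two_strings L U" "L > 0" "U > 0"
  shows "pi / 2 < q \<and> q < 3 * pi / 2 \<and> (\<exists>m::int. q = of_int m * pi / real L)"
proof -
  define P where "P = cos (q * L) * exp (x * L)"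
  have q: "0 \<le> q" "q < 2 * pi" and x: "x > 0" and sin: "sin (q * L) = 0"
    and eq: "cos q * sinh x = U / 4 * ((1 + P) / (1 - P))"
    using assms by (simp_all add: mem_two_strings_iff P_def)
  have "\<bar>P\<bar> = exp (x * L)"
    using abs_cos_eq_1_if_sin_eq_0[OF sin] by (simp add: P_def abs_mult)
  with x \<open>L > 0\<close> have "(1 + P) / (1 - P) < 0"
    by (intro one_plus_div_one_minus_neg) simp
  with \<open>U > 0\<close> have "U / 4 * ((1 + P) / (1 - P)) < 0"
    by (intro mult_pos_neg) auto
  with eq have "cos q * sinh x < 0"
    by linarith
  with x have "cos q < 0"
    by (simp add: mult_less_0_iff)
  moreover obtain m :: int where "q * L = of_int m * pi"
    using sin sin_zero_iff_int2 by blast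
  ultimately show ?thesis
    using cos_lt_zero_imp_bounds[OF q] \<open>L > 0\<close> by (auto simp: field_simps)
qed

lemma ex1_two_string:
  assumes "L > 0" "U > 0" "2 < U / 4 * L"
    and "sin (q * L) = 0" "pi / 2 < q" "q < 3 * pi / 2"
  shows "\<exists>!p. (q, fst p, snd p) \<in> two_strings L U"
proof -
  have "cos q < 0"
    using assms(5,6) by (intro cos_lt_zero_pi) auto
  moreover have "cos (q * L) = 1 \<or> cos (q * L) = -1"
    using abs_cos_eq_1_if_sin_eq_0[OF assms(4)] by linarith
  ultimately obtain x
    where x: "x > 0 \<and>
      cos q * sinh x = U / 4 * (1 + cos (q * L) * exp (x * L)) / (1 - cos (q * L) * exp (x * L))"
    and unique: "\<And>y. y > 0 \<and>
      cos q * sinh y = U / 4 * (1 + cos (q * L) * exp (y * L)) / (1 - cos (q * L) * exp (y * L))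
      \<Longrightarrow> y = x"
    using ex1_two_string_xi[of "cos (q * L)" "cos q" "U / 4" L] assms by auto
  show ?thesis
  proof (rule ex1I[of _ "(x, sin q * cosh x)"])
    show "(q, fst (x, sin q * cosh x), snd (x, sin q * cosh x)) \<in> two_strings L U"
      using x assms pi_gt_zero by (simp add: mem_two_strings_iff)
    show "p = (x, sin q * cosh x)" if "(q, fst p, snd p) \<in> two_strings L U" for p
      using that unique assms by (cases p) (auto simp: mem_two_strings_iff)
  qed
qed

lemma bij_betw_fst_if_ex1:
  assumes "fst ` S \<subseteq> Q" "\<And>q. q \<in> Q \<Longrightarrow> \<exists>!p. (q, p) \<in> S"
  shows "bij_betw fst S Q"
proof -
  have "inj_on fst S"
  proof (rule inj_onI)
    fix a b
    assume "a \<in> S" "b \<in> S" "fst a = fst b"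
    moreover from this assms have "\<exists>!p. (fst a, p) \<in> S"
      by blast
    ultimately show "a = b"
      by (metis prod.collapse)
  qed
  moreover have "Q \<subseteq> fst ` S"
    using assms(2) by (force simp: image_iff)
  ultimately show ?thesis
    using assms(1) by (auto simp: bij_betw_def)
qed

definition two_string_indices :: "nat \<Rightarrow> int set" where
  "two_string_indices L = {m. int L < 2 * m \<and> 2 * m < 3 * int L}"

lemma two_string_indices_eq: "two_string_indices L = {int L div 2 + 1 ..< (3 * int L + 1) div 2}"
  by (auto simp: two_string_indices_def)

lemma card_two_string_indices: "card (two_string_indices L) = (if odd L then L else L - 1)"
  by (cases "even L") (auto simp: two_string_indices_eq elim!: evenE oddE)

lemma pi_multiple_bounds_iff:
  assumes "L > 0"
  shows "pi / 2 < of_int m * pi / real L \<and> of_int m * pi / real L < 3 * pi / 2 \<longleftrightarrow>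
         m \<in> two_string_indices L"
proof -
  have "pi / 2 < of_int m * pi / real L \<longleftrightarrow> real L * pi < 2 * of_int m * pi"
    using assms by (simp add: field_simps)
  moreover have "of_int m * pi / real L < 3 * pi / 2 \<longleftrightarrow> 2 * of_int m * pi < 3 * real L * pi"
    using assms by (simp add: field_simps)
  moreover have "real L < 2 * of_int m \<longleftrightarrow> int L < 2 * m"
    and "2 * of_int m < 3 * real L \<longleftrightarrow> 2 * m < 3 * int L"
    by linarith+
  ultimately show ?thesis
    by (simp add: two_string_indices_def)
qed

lemma bij_betw_fst_two_strings:
  assumes "L > 0" "U > 0" "2 < U / 4 * L"
  shows "bij_betw fst (two_strings L U)
           ((\<lambda>m::int. of_int m * pi / real L) ` two_string_indices L)"
proof (rule bij_betw_fst_if_ex1)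
  show "fst ` two_strings L U \<subseteq>
    (\<lambda>m::int. of_int m * pi / real L) ` two_string_indices L"
  proof
    fix q
    assume "q \<in> fst ` two_strings L U"
    then obtain x Lam where "(q, x, Lam) \<in> two_strings L U"
      by force
    from two_string_quantized[OF this assms(1,2)] obtain m :: int
      where "q = of_int m * pi / real L" "pi / 2 < q" "q < 3 * pi / 2"
      by blast
    then show "q \<in> (\<lambda>m::int. of_int m * pi / real L) ` two_string_indices L"
      using pi_multiple_bounds_iff[OF assms(1), of m] by auto
  qed
next
  fix q
  assume "q \<in> (\<lambda>m::int. of_int m * pi / real L) ` two_string_indices L"
  then obtain m :: int where "q = of_int m * pi / real L" "m \<in> two_string_indices L"
    by blast
  then show "\<exists>!p. (q, p) \<in> two_strings L U"
    using ex1_two_string[OF assms, of q] pi_multiple_bounds_iff[OF assms(1), of m] assms(1)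
    by (simp add: sin_zero_iff_int2)
qed

theorem mainTheorem3:
  fixes L :: nat and U :: real
  assumes "L > 0" and "U > 0" and "real L > 8 / U"
  shows "(\<forall>q xi Lam. (q, xi, Lam) \<in> two_strings L U \<longrightarrow>
            pi / 2 < q \<and> q < 3 * pi / 2 \<and> (\<exists>m::int. q = of_int m * pi / real L))
       \<and> (\<forall>m::int. pi / 2 < of_int m * pi / real L \<and> of_int m * pi / real L < 3 * pi / 2 \<longrightarrow>
            (\<exists>!p. (of_int m * pi / real L, fst p, snd p) \<in> two_strings L U))
       \<and> finite (two_strings L U)
       \<and> card (two_strings L U) = (if odd L then L else L - 1)"
proof -
  have "2 < U / 4 * real L"
    using assms(2,3) by (simp add: field_simps)
  have quantized: "\<forall>q xi Lam. (q, xi, Lam) \<in> two_strings L U \<longrightarrow>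
      pi / 2 < q \<and> q < 3 * pi / 2 \<and> (\<exists>m::int. q = of_int m * pi / real L)"
    using two_string_quantized assms by blast
  have unique: "\<exists>!p. (of_int m * pi / real L, fst p, snd p) \<in> two_strings L U"
    if "pi / 2 < of_int m * pi / real L \<and> of_int m * pi / real L < 3 * pi / 2" for m :: int
    using that assms \<open>2 < U / 4 * real L\<close>
    by (intro ex1_two_string) (auto simp: sin_zero_iff_int2)
  have "bij_betw fst (two_strings L U)
      ((\<lambda>m::int. of_int m * pi / real L) ` two_string_indices L)"
    using bij_betw_fst_two_strings assms(1,2) \<open>2 < U / 4 * real L\<close> by blast
  moreover have "inj_on (\<lambda>m::int. of_int m * pi / real L) (two_string_indices L)"
    using assms(1) by (auto simp: inj_on_def)
  ultimately have "finite (two_strings L U)" "card (two_strings L U) = card (two_string_indices L)"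
    by (simp_all add: bij_betw_finite bij_betw_same_card card_image two_string_indices_eq)
  then show ?thesis
    using quantized unique card_two_string_indices by simp
qed

end
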